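(* Let $0<p\leq1$, let $G=(V,E)$ be any graph with $V=\{1,\dots,n\}$, and let $M=M(G)$. Then $\lambda_1(M)\geq\vartheta_2(G)$.
   Context: $M(G)=(m_{ij})$ is the $n\times n$ matrix with $m_{ii}=1$, and for $i\neq j$: $m_{ij}=1$ if $\{i,j\}\notin E$ and $m_{ij}=(p-1)/p$ if $\{i,j\}\in E$; $\lambda_1(M)$ is its largest eigenvalue. For a graph $H$ and real $k>1$, a rigid vector $k$-coloring of $H$ is a tuple of unit vectors $(u_1,\dots,u_n)$ in $\mathbb R^n$ with $\langle u_i,u_j\rangle=-1/(k-1)$ for all edges $\{i,j\}$ of $H$ and $\langle u_i,u_j\rangle\geq-1/(k-1)$ for all non-adjacent $i\neq j$; $\bar\vartheta_2(H)$ is the infimum of such $k$, and $\vartheta_2(G)=\bar\vartheta_2(\bar G)$ with $\bar G$ the complement of $G$. *)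

theory Defs
  imports "HOL-Analysis.Analysis"
begin

text \<open>Graphs on the vertex set 'n (a finite type with CARD('n) = n elements,
 playing the role of {1..n}), given by a symmetric irreflexive edge relation.\<close>

definition simple_graph :: "('n \<Rightarrow> 'n \<Rightarrow> bool) \<Rightarrow> bool" where
  "simple_graph E \<longleftrightarrow> (\<forall>i j. E i j \<longrightarrow> E j i) \<and> (\<forall>i. \<not> E i i)"

definition complement_graph :: "('n \<Rightarrow> 'n \<Rightarrow> bool) \<Rightarrow> 'n \<Rightarrow> 'n \<Rightarrow> bool" where
  "complement_graph E = (\<lambda>i j. i \<noteq> j \<and> \<not> E i j)"

definition M_mat :: "real \<Rightarrow> ('n::finite \<Rightarrow> 'n \<Rightarrow> bool) \<Rightarrow> real^'n^'n" where
  "M_mat p E = (\<chi> i j. if i = j then 1 else if E i j then (p - 1) / p else 1)"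

definition real_eigenvalues :: "real^'n^'n \<Rightarrow> real set" where
  "real_eigenvalues A = {l. \<exists>v. v \<noteq> 0 \<and> A *v v = l *\<^sub>R v}"

definition lambda1 :: "real^'n^'n \<Rightarrow> real" where
  "lambda1 A = Max (real_eigenvalues A)"

definition rigid_vector_coloring ::
    "('n::finite \<Rightarrow> 'n \<Rightarrow> bool) \<Rightarrow> real \<Rightarrow> ('n \<Rightarrow> real^'n) \<Rightarrow> bool" where
  "rigid_vector_coloring H k u \<longleftrightarrow>
     (\<forall>i. norm (u i) = 1) \<and>
     (\<forall>i j. i \<noteq> j \<longrightarrow> H i j \<longrightarrow> u i \<bullet> u j = - 1 / (k - 1)) \<and>
     (\<forall>i j. i \<noteq> j \<longrightarrow> \<not> H i j \<longrightarrow> u i \<bullet> u j \<ge> - 1 / (k - 1))"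

definition theta2_bar :: "('n::finite \<Rightarrow> 'n \<Rightarrow> bool) \<Rightarrow> real" where
  "theta2_bar H = Inf {k. k > 1 \<and> (\<exists>u. rigid_vector_coloring H k u)}"

definition theta2 :: "('n::finite \<Rightarrow> 'n \<Rightarrow> bool) \<Rightarrow> real" where
  "theta2 E = theta2_bar (complement_graph E)"

end

theory Submission
  imports Defs
begin

text \<open>M is symmetric with unit diagonal, so for every k at least the largest eigenvalue of M
  the matrix kI - M is positive semidefinite and hence a Gram matrix: kI - M = (w i \<bullet> w j).
  The vectors u i = w i / sqrt (k - 1) are unit vectors with u i \<bullet> u j = - M i j / (k - 1)
  for i \<noteq> j: this is -1/(k - 1) on the non-edges of G and (1 - p)/(p (k - 1)) \<ge> 0 on its
  edges, i.e. a rigid vector k-colouring of the complement of G. Positive semidefiniteness comes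
  from the spectral theorem, which follows by maximising the Rayleigh quotient over the unit
  sphere of an invariant subspace.\<close>

lemma linear_coeff_zero_if_quadratic_nonpos:
  fixes a b :: real
  assumes "\<And>t. 2 * t * a + t\<^sup>2 * b \<le> 0"
  shows "a = 0"
proof -
  define s where "s = \<bar>b\<bar> + 1"
  have s: "s > 0" "2 * s + b > 0" unfolding s_def by auto
  have "2 * (a / s) * a + (a / s)\<^sup>2 * b \<le> 0" by (rule assms)
  then have "a\<^sup>2 * (2 * s + b) / s\<^sup>2 \<le> 0"
    using s by (simp add: field_simps power2_eq_square)
  then have "a\<^sup>2 * (2 * s + b) \<le> 0"
    using s by (simp add: divide_le_0_iff)
  then have "a\<^sup>2 \<le> 0" using s by (simp add: mult_le_0_iff)
  then show ?thesis by simp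
qed

lemma self_adjoint_quadratic_form_add:
  fixes f :: "'a::real_inner \<Rightarrow> 'a"
  assumes "linear f" and "\<And>x y. f x \<bullet> y = x \<bullet> f y"
  shows "(x + t *\<^sub>R z) \<bullet> f (x + t *\<^sub>R z) = x \<bullet> f x + 2 * t * (z \<bullet> f x) + t\<^sup>2 * (z \<bullet> f z)"
proof -
  have "x \<bullet> f z = z \<bullet> f x" by (metis assms(2) inner_commute)
  then show ?thesis
    using assms(1)
    by (simp add: linear_add linear_cmul inner_add_left inner_add_right power2_eq_square algebra_simps)
qed

text \<open>First-order condition: x maximises the form on W, so its derivative 2 (z \<bullet> f x) vanishes
  in every direction z \<in> W, in particular for z = f x.\<close>
lemma self_adjoint_quadratic_form_max_imp_kernel:
  fixes f :: "'a::real_inner \<Rightarrow> 'a"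
  assumes "linear f" and adj: "\<And>x y. f x \<bullet> y = x \<bullet> f y"
    and W: "subspace W" and inv: "\<And>y. y \<in> W \<Longrightarrow> f y \<in> W"
    and nonpos: "\<And>y. y \<in> W \<Longrightarrow> y \<bullet> f y \<le> 0"
    and x: "x \<in> W" "x \<bullet> f x = 0"
  shows "f x = 0"
proof -
  have "2 * t * (f x \<bullet> f x) + t\<^sup>2 * (f x \<bullet> f (f x)) \<le> 0" for t
  proof -
    have "x + t *\<^sub>R f x \<in> W" using W x inv by (simp add: subspace_add subspace_scale)
    then have "(x + t *\<^sub>R f x) \<bullet> f (x + t *\<^sub>R f x) \<le> 0" by (rule nonpos)
    then show ?thesis using self_adjoint_quadratic_form_add[OF assms(1,2)] x(2) by simp
  qed
  then have "f x \<bullet> f x = 0" by (rule linear_coeff_zero_if_quadratic_nonpos)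
  then show ?thesis by simp
qed

lemma self_adjoint_eigenvector_in_invariant_subspace:
  fixes f :: "'a::euclidean_space \<Rightarrow> 'a"
  assumes lin: "linear f" and adj: "\<And>x y. f x \<bullet> y = x \<bullet> f y"
    and W: "subspace W" and inv: "\<And>y. y \<in> W \<Longrightarrow> f y \<in> W"
    and w: "w \<in> W" "w \<noteq> 0"
  obtains x where "x \<in> W" "norm x = 1" "f x = (x \<bullet> f x) *\<^sub>R x"
proof -
  define S where "S = W \<inter> sphere 0 1"
  have unit: "y /\<^sub>R norm y \<in> S" if "y \<in> W" "y \<noteq> 0" for y
    using that W unfolding S_def by (simp add: subspace_scale)
  have "compact S" unfolding S_def
    by (intro closed_Int_compact closed_subspace W compact_sphere)
  moreover have "continuous_on S (\<lambda>x. x \<bullet> f x)"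
    using lin by (intro continuous_intros linear_continuous_on) (simp add: linear_conv_bounded_linear)
  moreover have "S \<noteq> {}" using unit[OF w] by blast
  ultimately obtain x where x: "x \<in> S" and max: "\<And>y. y \<in> S \<Longrightarrow> y \<bullet> f y \<le> x \<bullet> f x"
    using continuous_attains_sup[of S "\<lambda>x. x \<bullet> f x"] by blast
  define \<mu> where "\<mu> = x \<bullet> f x"
  define g where "g y = f y - \<mu> *\<^sub>R y" for y
  have xW: "x \<in> W" and nx: "norm x = 1" using x by (auto simp: S_def)
  have "g x = 0"
  proof (rule self_adjoint_quadratic_form_max_imp_kernel[where f = g and W = W])
    show "linear g" unfolding g_def using lin by (simp add: linear_iff algebra_simps)
    show "g y \<bullet> z = y \<bullet> g z" for y z unfolding g_def inner_diff_left inner_diff_right adj by (simp add: inner_commute)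
    show "g y \<in> W" if "y \<in> W" for y using that W inv unfolding g_def by (simp add: subspace_diff subspace_scale)
    show "y \<bullet> g y \<le> 0" if "y \<in> W" for y
    proof (cases "y = 0")
      case False
      have "(y /\<^sub>R norm y) \<bullet> f (y /\<^sub>R norm y) \<le> \<mu>" unfolding \<mu>_def by (rule max[OF unit[OF that False]])
      then have "(y \<bullet> f y) / (norm y)\<^sup>2 \<le> \<mu>"
        using lin by (simp add: linear_cmul power2_eq_square divide_inverse mult.commute mult.left_commute)
      then have "y \<bullet> f y \<le> \<mu> * (y \<bullet> y)"
        using False by (simp add: divide_le_eq power2_norm_eq_inner)
      then show ?thesis unfolding g_def by (simp add: inner_diff_right)
    qed simp
    show "subspace W" by (fact W)
    show "x \<in> W" by (fact xW)
    show "x \<bullet> g x = 0" using nx unfolding g_def \<mu>_def by (simp add: inner_diff_right norm_eq_1)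
  qed
  then show thesis using that xW nx unfolding g_def \<mu>_def by simp
qed

definition orthonormal_eigenvectors :: "('a::real_inner \<Rightarrow> 'a) \<Rightarrow> 'a set \<Rightarrow> bool" where
  "orthonormal_eigenvectors f B \<longleftrightarrow>
     finite B \<and> pairwise orthogonal B \<and> (\<forall>b\<in>B. norm b = 1 \<and> f b = (b \<bullet> f b) *\<^sub>R b)"

lemma inner_sum_orthonormal:
  fixes B :: "'a::real_inner set"
  assumes "finite B" "pairwise orthogonal B" "b \<in> B" "norm b = 1"
  shows "b \<bullet> (\<Sum>b'\<in>B. c b' *\<^sub>R b') = c b"
proof -
  have "b \<bullet> (\<Sum>b'\<in>B. c b' *\<^sub>R b') = c b * (b \<bullet> b) + (\<Sum>b'\<in>B - {b}. c b' * (b \<bullet> b'))"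
    using assms(1,3) by (simp add: sum.remove inner_add_right inner_sum_right)
  also have "(\<Sum>b'\<in>B - {b}. c b' * (b \<bullet> b')) = 0"
    using assms(2,3) by (intro sum.neutral) (auto simp: pairwise_def orthogonal_def)
  finally show ?thesis using assms(4) by (simp add: norm_eq_1)
qed

lemma inner_sum_orthonormal_sum:
  fixes B :: "'a::real_inner set"
  assumes "finite B" "pairwise orthogonal B" "\<forall>b\<in>B. norm b = 1"
  shows "(\<Sum>b\<in>B. c b *\<^sub>R b) \<bullet> (\<Sum>b\<in>B. d b *\<^sub>R b) = (\<Sum>b\<in>B. c b * d b)"
  using assms by (simp add: inner_sum_left inner_sum_orthonormal)

lemma parseval_orthonormal_basis:
  fixes B :: "'a::real_inner set"
  assumes "finite B" "pairwise orthogonal B" "\<forall>b\<in>B. norm b = 1"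
    and expand: "\<And>y. (\<Sum>b\<in>B. (b \<bullet> y) *\<^sub>R b) = y"
  shows "x \<bullet> y = (\<Sum>b\<in>B. (b \<bullet> x) * (b \<bullet> y))"
  using inner_sum_orthonormal_sum[OF assms(1-3), of "\<lambda>b. b \<bullet> x" "\<lambda>b. b \<bullet> y"] by (simp only: expand)

text \<open>If the expansion of y in B is not y itself, the orthogonal complement of B is a nonzero
  invariant subspace, and an eigenvector in it extends B.\<close>
lemma orthonormal_eigenvectors_extend:
  fixes f :: "'a::euclidean_space \<Rightarrow> 'a"
  assumes lin: "linear f" and adj: "\<And>x y. f x \<bullet> y = x \<bullet> f y"
    and B: "orthonormal_eigenvectors f B" and y: "(\<Sum>b\<in>B. (b \<bullet> y) *\<^sub>R b) \<noteq> y"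
  obtains x where "x \<notin> B" "orthonormal_eigenvectors f (insert x B)"
proof -
  have fin: "finite B" and orth: "pairwise orthogonal B"
    and eig: "\<And>b. b \<in> B \<Longrightarrow> norm b = 1 \<and> f b = (b \<bullet> f b) *\<^sub>R b"
    using B unfolding orthonormal_eigenvectors_def by auto
  define W where "W = {x. \<forall>b\<in>B. b \<bullet> x = 0}"
  have W: "subspace W" unfolding W_def subspace_def by (simp add: inner_add_right)
  have inv: "f x \<in> W" if "x \<in> W" for x
  proof -
    have "b \<bullet> f x = (b \<bullet> f b) * (b \<bullet> x)" if "b \<in> B" for b
      by (metis adj eig[OF that] inner_scaleR_left)
    then show ?thesis using \<open>x \<in> W\<close> unfolding W_def by simp
  qed
  define w where "w = y - (\<Sum>b\<in>B. (b \<bullet> y) *\<^sub>R b)"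
  have "w \<in> W" "w \<noteq> 0"
    using y eig inner_sum_orthonormal[OF fin orth] unfolding W_def w_def by (auto simp: inner_diff_right)
  then obtain x where x: "x \<in> W" "norm x = 1" "f x = (x \<bullet> f x) *\<^sub>R x"
    using self_adjoint_eigenvector_in_invariant_subspace[OF lin adj W inv] by blast
  have xB: "b \<bullet> x = 0" if "b \<in> B" for b using x(1) that unfolding W_def by blast
  have "x \<notin> B" using xB x(2) by force
  moreover have "pairwise orthogonal (insert x B)"
    using orth xB by (auto simp: pairwise_insert orthogonal_def inner_commute)
  ultimately show thesis
    using that fin eig x(2,3) unfolding orthonormal_eigenvectors_def by auto
qed

text \<open>Spectral theorem: an orthonormal eigenfamily of maximal size is a basis.\<close>
lemma self_adjoint_orthonormal_eigenbasis:
  fixes f :: "'a::euclidean_space \<Rightarrow> 'a"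
  assumes lin: "linear f" and adj: "\<And>x y. f x \<bullet> y = x \<bullet> f y"
  obtains B where "orthonormal_eigenvectors f B" "\<And>y. (\<Sum>b\<in>B. (b \<bullet> y) *\<^sub>R b) = y"
proof -
  have "card B < Suc DIM('a)" if "orthonormal_eigenvectors f B" for B
  proof -
    have "independent B"
      using that unfolding orthonormal_eigenvectors_def
      by (metis norm_zero pairwise_orthogonal_independent zero_neq_one)
    then show ?thesis using independent_card_le by (simp add: less_Suc_eq_le)
  qed
  moreover have "orthonormal_eigenvectors f {}" by (simp add: orthonormal_eigenvectors_def)
  ultimately obtain B where B: "orthonormal_eigenvectors f B"
    and max: "\<And>B'. orthonormal_eigenvectors f B' \<Longrightarrow> card B' \<le> card B"
    using Lattices_Big.ex_has_greatest_nat[of "orthonormal_eigenvectors f" "{}" card] by blast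
  have "(\<Sum>b\<in>B. (b \<bullet> y) *\<^sub>R b) = y" for y
  proof (rule ccontr)
    assume "(\<Sum>b\<in>B. (b \<bullet> y) *\<^sub>R b) \<noteq> y"
    then obtain x where "x \<notin> B" "orthonormal_eigenvectors f (insert x B)"
      using orthonormal_eigenvectors_extend[OF lin adj B] by blast
    with max[of "insert x B"] B show False by (simp add: orthonormal_eigenvectors_def)
  qed
  with B that show thesis by blast
qed

lemma symmetric_matrix_self_adjoint:
  fixes A :: "real^'n^'n"
  assumes "transpose A = A"
  shows "(A *v x) \<bullet> y = x \<bullet> (A *v y)"
  by (metis assms dot_lmul_matrix vector_transpose_matrix)

lemma symmetric_matrix_orthonormal_eigenbasis:
  fixes A :: "real^'n^'n"
  assumes "transpose A = A"
  obtains B where "orthonormal_eigenvectors ((*v) A) B" "\<And>y. (\<Sum>b\<in>B. (b \<bullet> y) *\<^sub>R b) = y"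
  using self_adjoint_orthonormal_eigenbasis[OF matrix_vector_mul_linear] symmetric_matrix_self_adjoint[OF assms]
  by blast

lemma finite_real_eigenvalues_symmetric:
  fixes A :: "real^'n^'n"
  assumes sym: "transpose A = A"
  shows "finite (real_eigenvalues A)"
proof -
  obtain B where B: "orthonormal_eigenvectors ((*v) A) B" and expand: "\<And>y. (\<Sum>b\<in>B. (b \<bullet> y) *\<^sub>R b) = y"
    using symmetric_matrix_orthonormal_eigenbasis[OF sym] by blast
  define lam where "lam b = b \<bullet> (A *v b)" for b
  have eig: "\<And>b. b \<in> B \<Longrightarrow> A *v b = lam b *\<^sub>R b"
    using B unfolding orthonormal_eigenvectors_def lam_def by auto
  have "real_eigenvalues A \<subseteq> lam ` B"
  proof
    fix l assume "l \<in> real_eigenvalues A"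
    then obtain v where v: "v \<noteq> 0" "A *v v = l *\<^sub>R v" unfolding real_eigenvalues_def by blast
    have "\<exists>b\<in>B. b \<bullet> v \<noteq> 0"
    proof (rule ccontr)
      assume "\<not> (\<exists>b\<in>B. b \<bullet> v \<noteq> 0)"
      then have "(\<Sum>b\<in>B. (b \<bullet> v) *\<^sub>R b) = 0" by simp
      with expand[of v] v(1) show False by simp
    qed
    then obtain b where b: "b \<in> B" "b \<bullet> v \<noteq> 0" by blast
    have "l * (b \<bullet> v) = (A *v b) \<bullet> v"
      using v(2) by (simp add: symmetric_matrix_self_adjoint[OF sym])
    also have "\<dots> = lam b * (b \<bullet> v)" using b(1) by (simp add: eig)
    finally show "l \<in> lam ` B" using b by auto
  qed
  moreover have "finite B" using B unfolding orthonormal_eigenvectors_def by blast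
  ultimately show ?thesis by (meson finite_imageI finite_subset)
qed

lemma real_eigenvalue_le_lambda1:
  fixes A :: "real^'n^'n"
  assumes "transpose A = A" and "l \<in> real_eigenvalues A"
  shows "l \<le> lambda1 A"
  unfolding lambda1_def using finite_real_eigenvalues_symmetric[OF assms(1)] assms(2) by simp

lemma axis_inner_matrix_vector_axis:
  fixes A :: "real^'n^'n"
  shows "axis i 1 \<bullet> (A *v axis j 1) = A $ i $ j"
  by (simp add: matrix_vector_mult_basis inner_axis' column_def)

lemma orthonormal_basis_components:
  fixes B :: "(real^'n) set"
  assumes "finite B" "pairwise orthogonal B" "\<forall>b\<in>B. norm b = 1"
    and "\<And>y. (\<Sum>b\<in>B. (b \<bullet> y) *\<^sub>R b) = y"
  shows "(\<Sum>b\<in>B. b $ i * b $ j) = (if i = j then 1 else 0)"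
proof -
  have "(\<Sum>b\<in>B. b $ i * b $ j) = (\<Sum>b\<in>B. (b \<bullet> axis i 1) * (b \<bullet> axis j 1))"
    by (simp add: inner_axis)
  also have "\<dots> = axis i 1 \<bullet> axis j (1::real)"
    by (rule parseval_orthonormal_basis[OF assms, symmetric])
  also have "\<dots> = (if i = j then 1 else 0)"
    by (simp add: inner_axis_axis)
  finally show ?thesis .
qed

lemma orthonormal_eigenbasis_matrix_entry:
  fixes A :: "real^'n^'n"
  assumes sym: "transpose A = A"
    and basis: "finite B" "pairwise orthogonal B" "\<forall>b\<in>B. norm b = 1"
      "\<And>y. (\<Sum>b\<in>B. (b \<bullet> y) *\<^sub>R b) = y"
    and eig: "\<And>b. b \<in> B \<Longrightarrow> A *v b = lam b *\<^sub>R b"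
  shows "A $ i $ j = (\<Sum>b\<in>B. lam b * b $ i * b $ j)"
proof -
  have "A $ i $ j = axis i 1 \<bullet> (A *v axis j 1)"
    by (rule axis_inner_matrix_vector_axis[symmetric])
  also have "\<dots> = (\<Sum>b\<in>B. (b \<bullet> axis i 1) * (b \<bullet> (A *v axis j 1)))"
    by (rule parseval_orthonormal_basis[OF basis])
  also have "\<dots> = (\<Sum>b\<in>B. lam b * b $ i * b $ j)"
  proof (rule sum.cong[OF refl])
    fix b assume "b \<in> B"
    have "b \<bullet> (A *v axis j 1) = (A *v b) \<bullet> axis j 1"
      by (rule symmetric_matrix_self_adjoint[OF sym, symmetric])
    then show "(b \<bullet> axis i 1) * (b \<bullet> (A *v axis j 1)) = lam b * b $ i * b $ j"
      using eig[OF \<open>b \<in> B\<close>] by (simp add: inner_axis)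
  qed
  finally show ?thesis .
qed

text \<open>kI - A = \<Sum> (k - \<lambda> b) b b^T over an orthonormal eigenbasis, and k - \<lambda> b \<ge> 0 has a square root.\<close>
lemma symmetric_matrix_shift_gram:
  fixes A :: "real^'n^'n"
  assumes sym: "transpose A = A" and k: "\<And>l. l \<in> real_eigenvalues A \<Longrightarrow> l \<le> k"
  obtains w :: "'n \<Rightarrow> real^'n" where "\<And>i j. w i \<bullet> w j = (if i = j then k else 0) - A $ i $ j"
proof -
  obtain B where B: "orthonormal_eigenvectors ((*v) A) B" and expand: "\<And>y. (\<Sum>b\<in>B. (b \<bullet> y) *\<^sub>R b) = y"
    using symmetric_matrix_orthonormal_eigenbasis[OF sym] by blast
  define lam where "lam b = b \<bullet> (A *v b)" for b
  have fin: "finite B" and orth: "pairwise orthogonal B" and unit: "\<forall>b\<in>B. norm b = 1"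
    and eig: "\<And>b. b \<in> B \<Longrightarrow> A *v b = lam b *\<^sub>R b"
    using B unfolding orthonormal_eigenvectors_def lam_def by auto
  have lam_le: "lam b \<le> k" if "b \<in> B" for b
  proof (rule k)
    have "b \<noteq> 0" using unit that by auto
    then show "lam b \<in> real_eigenvalues A" unfolding real_eigenvalues_def using eig[OF that] by blast
  qed
  have entry: "A $ i $ j = (\<Sum>b\<in>B. lam b * b $ i * b $ j)" for i j
    by (rule orthonormal_eigenbasis_matrix_entry[OF sym fin orth unit expand]) (rule eig)
  define w where "w i = (\<Sum>b\<in>B. (sqrt (k - lam b) * b $ i) *\<^sub>R b)" for i
  have "w i \<bullet> w j = (if i = j then k else 0) - A $ i $ j" for i j
  proof -
    have "w i \<bullet> w j = (\<Sum>b\<in>B. (sqrt (k - lam b) * b $ i) * (sqrt (k - lam b) * b $ j))"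
      unfolding w_def by (rule inner_sum_orthonormal_sum[OF fin orth unit])
    also have "\<dots> = (\<Sum>b\<in>B. k * (b $ i * b $ j) - lam b * b $ i * b $ j)"
    proof (rule sum.cong[OF refl])
      fix b assume "b \<in> B"
      then have "sqrt (k - lam b) * sqrt (k - lam b) = k - lam b" using lam_le by simp
      then show "(sqrt (k - lam b) * b $ i) * (sqrt (k - lam b) * b $ j) = k * (b $ i * b $ j) - lam b * b $ i * b $ j"
        by (metis left_diff_distrib mult.assoc mult.left_commute)
    qed
    also have "\<dots> = (if i = j then k else 0) - A $ i $ j"
      by (simp add: entry sum_subtractf sum_distrib_left[symmetric] orthonormal_basis_components[OF fin orth unit expand])
    finally show ?thesis .
  qed
  then show thesis by (rule that)
qed

lemma symmetric_matrix_diag_le_lambda1: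
  fixes A :: "real^'n^'n"
  assumes "transpose A = A"
  shows "A $ i $ i \<le> lambda1 A"
proof -
  obtain w :: "'n \<Rightarrow> real^'n" where "\<And>i j. w i \<bullet> w j = (if i = j then lambda1 A else 0) - A $ i $ j"
    using symmetric_matrix_shift_gram[OF assms real_eigenvalue_le_lambda1[OF assms]] by blast
  from this[of i i] have "w i \<bullet> w i = lambda1 A - A $ i $ i" by simp
  then show ?thesis using inner_ge_zero[of "w i"] by linarith
qed

lemma M_mat_symmetric:
  assumes "simple_graph E"
  shows "transpose (M_mat p E) = M_mat p E"
  using assms unfolding simple_graph_def transpose_def M_mat_def by (auto simp: vec_eq_iff)

lemma M_mat_gram_rigid_vector_coloring:
  fixes w :: "'n::finite \<Rightarrow> real^'n"
  assumes "0 < p" "p \<le> 1" "1 < k"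
    and gram: "\<And>i j. w i \<bullet> w j = (if i = j then k else 0) - M_mat p E $ i $ j"
  shows "rigid_vector_coloring (complement_graph E) k (\<lambda>i. w i /\<^sub>R sqrt (k - 1))"
proof -
  have M: "M_mat p E $ i $ j = (if i = j then 1 else if E i j then (p - 1) / p else 1)" for i j
    by (simp add: M_mat_def)
  have u: "(w i /\<^sub>R sqrt (k - 1)) \<bullet> (w j /\<^sub>R sqrt (k - 1)) = ((if i = j then k else 0) - M_mat p E $ i $ j) / (k - 1)" for i j
    using assms(3) by (simp add: divide_simps gram)
  show ?thesis
    unfolding rigid_vector_coloring_def
  proof (intro conjI allI impI)
    fix i
    have "(w i /\<^sub>R sqrt (k - 1)) \<bullet> (w i /\<^sub>R sqrt (k - 1)) = 1"
      unfolding u M using assms(3) by simp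
    then show "norm (w i /\<^sub>R sqrt (k - 1)) = 1" by (simp only: norm_eq_1)
  next
    fix i j assume "i \<noteq> j" "complement_graph E i j"
    then show "(w i /\<^sub>R sqrt (k - 1)) \<bullet> (w j /\<^sub>R sqrt (k - 1)) = - 1 / (k - 1)"
      unfolding u M complement_graph_def by simp
  next
    fix i j assume "i \<noteq> j" "\<not> complement_graph E i j"
    then have "(w i /\<^sub>R sqrt (k - 1)) \<bullet> (w j /\<^sub>R sqrt (k - 1)) = (1 - p) / p / (k - 1)"
      unfolding u M complement_graph_def by (simp add: minus_divide_left)
    moreover have "(1 - p) / p / (k - 1) \<ge> 0" using assms(1-3) by simp
    moreover have "- 1 / (k - 1) \<le> 0" using assms(3) by simp
    ultimately show "(w i /\<^sub>R sqrt (k - 1)) \<bullet> (w j /\<^sub>R sqrt (k - 1)) \<ge> - 1 / (k - 1)" by linarith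
  qed
qed

lemma theta2_le:
  assumes "\<And>k. L < k \<Longrightarrow> 1 < k \<and> (\<exists>u. rigid_vector_coloring (complement_graph E) k u)"
  shows "theta2 E \<le> L"
  unfolding theta2_def theta2_bar_def
proof (rule dense_ge)
  fix k assume "L < k"
  then show "Inf {k. 1 < k \<and> (\<exists>u. rigid_vector_coloring (complement_graph E) k u)} \<le> k"
    using assms by (intro cInf_lower bdd_belowI[of _ 1]) auto
qed

theorem lemma10:
  fixes p :: real and E :: "'n::finite \<Rightarrow> 'n \<Rightarrow> bool"
  assumes "0 < p" and "p \<le> 1"
    and "simple_graph E"
  shows "lambda1 (M_mat p E) \<ge> theta2 E"
proof (rule theta2_le)
  let ?M = "M_mat p E"
  have sym: "transpose ?M = ?M" using assms(3) by (rule M_mat_symmetric)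
  have "?M $ i $ i = 1" for i by (simp add: M_mat_def)
  then have "1 \<le> lambda1 ?M" using symmetric_matrix_diag_le_lambda1[OF sym] by metis
  fix k assume k: "lambda1 ?M < k"
  then have "1 < k" using \<open>1 \<le> lambda1 ?M\<close> by linarith
  have eigenvalue_le: "l \<le> k" if "l \<in> real_eigenvalues ?M" for l
    using real_eigenvalue_le_lambda1[OF sym that] k by linarith
  obtain w :: "'n \<Rightarrow> real^'n" where gram: "\<And>i j. w i \<bullet> w j = (if i = j then k else 0) - ?M $ i $ j"
    using symmetric_matrix_shift_gram[OF sym eigenvalue_le] by blast
  show "1 < k \<and> (\<exists>u. rigid_vector_coloring (complement_graph E) k u)"
    using \<open>1 < k\<close> M_mat_gram_rigid_vector_coloring[OF assms(1,2) \<open>1 < k\<close> gram] by blast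
qed

end
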